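(* For every stepwise NFTA $N$, the corresponding transition algebra $\mathcal{F}_N$ is a forest algebra.
   Context: A stepwise NFTA is $N=(Q,\Sigma,\delta,\mathsf{Init},q_0,q_F)$ with finite state set $Q$, $\delta\subseteq Q^3$. Its transition algebra is $\mathcal{F}_N=(H,V,\oplus_{HH},\oplus_{HV},\oplus_{VH},\odot_{VV},\odot_{VH},\mathrm{id}_Q,\mathrm{id}_{Q^2})$ with $H=2^{Q^2}$, $V=2^{(Q^2)^2}$, $\mathrm{id}_Q=\{(q,q)\mid q\in Q\}$, $\mathrm{id}_{Q^2}=\{((q_1,q_2),(q_1,q_2))\mid q_1,q_2\in Q\}$, and $F_1\oplus_{HH}F_2=\{(q_1,q_3)\mid (q_1,q_2)\in F_1,(q_2,q_3)\in F_2\}$; $C_1\odot_{VV}C_2=\{((q_1,q_2),(q_5,q_6))\mid ((q_1,q_2),(q_3,q_4))\in C_1,((q_3,q_4),(q_5,q_6))\in C_2\}$; $C\odot_{VH}F=\{(q_1,q_2)\mid((q_1,q_2),(q_3,q_4))\in C,(q_3,q_4)\in F\}$; $F\oplus_{HV}C=\{((q_1,q_3),(q_4,q_5))\mid (q_1,q_2)\in F,((q_2,q_3),(q_4,q_5))\in C\}$; $C\oplus_{VH}F=\{((q_1,q_5),(q_3,q_4))\mid((q_1,q_2),(q_3,q_4))\in C,(q_2,q_5)\in F\}$. A forest algebra is $(H,V,\oplus_{HH},\oplus_{HV},\oplus_{VH},\odot_{VV},\odot_{VH},\varepsilon,\Box)$ with monoids $(H,\oplus_{HH},\varepsilon)$,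 $(V,\odot_{VV},\Box)$, maps $\oplus_{HV}:H\times V\to V$, $\oplus_{VH}:V\times H\to V$, $\odot_{VH}:V\times H\to H$, satisfying for all $F_i\in H,C_i\in V$ (indices determined by sorts): $\varepsilon\oplus F_1=F_1=F_1\oplus\varepsilon$; $\varepsilon\oplus C_1=C_1=C_1\oplus\varepsilon$; $\Box\odot C_1=C_1=C_1\odot\Box$; $\Box\odot F_1=F_1$; $(F_1\oplus F_2)\oplus F_3=F_1\oplus(F_2\oplus F_3)$; $(F_1\oplus F_2)\oplus C_1=F_1\oplus(F_2\oplus C_1)$; $(C_1\oplus F_1)\oplus F_2=C_1\oplus(F_1\oplus F_2)$; $(F_1\oplus C_1)\oplus F_2=F_1\oplus(C_1\oplus F_2)$; $(C_1\odot C_2)\odot C_3=C_1\odot(C_2\odot C_3)$; $(C_1\odot C_2)\odot F_1=C_1\odot(C_2\odot F_1)$; $(F_1\oplus C_1)\odot F_2=F_1\oplus(C_1\odot F_2)$; $(F_1\oplus C_1)\odot C_2=F_1\oplus(C_1\odot C_2)$; $(C_1\oplus F_1)\odot F_2=(C_1\odot F_2)\oplus F_1$; $(C_1\oplus F_1)\odot C_2=(C_1\odot C_2)\oplus F_1$. *)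

theory Defs
  imports Main
begin

(* Forest algebra (H,V,oHH,oHV,oVH,dVV,dVH,eps,box): the carriers H and V are the
   full types 'h and 'v. (H,oHH,eps) and (V,dVV,box) monoids, plus the axioms. *)
definition forest_algebra ::
  "('h \<Rightarrow> 'h \<Rightarrow> 'h) \<Rightarrow> ('h \<Rightarrow> 'v \<Rightarrow> 'v) \<Rightarrow> ('v \<Rightarrow> 'h \<Rightarrow> 'v) \<Rightarrow>
   ('v \<Rightarrow> 'v \<Rightarrow> 'v) \<Rightarrow> ('v \<Rightarrow> 'h \<Rightarrow> 'h) \<Rightarrow> 'h \<Rightarrow> 'v \<Rightarrow> bool" where
  "forest_algebra oHH oHV oVH dVV dVH eps box \<longleftrightarrow>
     (\<forall>F1. oHH eps F1 = F1 \<and> oHH F1 eps = F1) \<and>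
     (\<forall>C1. oHV eps C1 = C1 \<and> oVH C1 eps = C1) \<and>
     (\<forall>C1. dVV box C1 = C1 \<and> dVV C1 box = C1) \<and>
     (\<forall>F1. dVH box F1 = F1) \<and>
     (\<forall>F1 F2 F3. oHH (oHH F1 F2) F3 = oHH F1 (oHH F2 F3)) \<and>
     (\<forall>F1 F2 C1. oHV (oHH F1 F2) C1 = oHV F1 (oHV F2 C1)) \<and>
     (\<forall>C1 F1 F2. oVH (oVH C1 F1) F2 = oVH C1 (oHH F1 F2)) \<and>
     (\<forall>F1 C1 F2. oVH (oHV F1 C1) F2 = oHV F1 (oVH C1 F2)) \<and>
     (\<forall>C1 C2 C3. dVV (dVV C1 C2) C3 = dVV C1 (dVV C2 C3)) \<and>
     (\<forall>C1 C2 F1. dVH (dVV C1 C2) F1 = dVH C1 (dVH C2 F1)) \<and>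
     (\<forall>F1 C1 F2. dVH (oHV F1 C1) F2 = oHH F1 (dVH C1 F2)) \<and>
     (\<forall>F1 C1 C2. dVV (oHV F1 C1) C2 = oHV F1 (dVV C1 C2)) \<and>
     (\<forall>C1 F1 F2. dVH (oVH C1 F1) F2 = oHH (dVH C1 F2) F1) \<and>
     (\<forall>C1 F1 C2. dVV (oVH C1 F1) C2 = oVH (dVV C1 C2) F1)"

(* Stepwise NFTA N = (Q, Sigma, delta, Init, q0, qF); Q is the finite type 'q. *)
record ('q, 'a) nfta =
  delta :: "('q \<times> 'q \<times> 'q) set"
  Init :: "'a \<Rightarrow> 'q set"
  q0 :: 'q
  qF :: 'q

definition tHH :: "('q \<times> 'q) set \<Rightarrow> ('q \<times> 'q) set \<Rightarrow> ('q \<times> 'q) set" where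
  "tHH F1 F2 = {(q1, q3) | q1 q2 q3. (q1, q2) \<in> F1 \<and> (q2, q3) \<in> F2}"

definition tVV :: "(('q \<times> 'q) \<times> ('q \<times> 'q)) set \<Rightarrow> (('q \<times> 'q) \<times> ('q \<times> 'q)) set \<Rightarrow> (('q \<times> 'q) \<times> ('q \<times> 'q)) set" where
  "tVV C1 C2 = {((q1, q2), (q5, q6)) | q1 q2 q3 q4 q5 q6.
      ((q1, q2), (q3, q4)) \<in> C1 \<and> ((q3, q4), (q5, q6)) \<in> C2}"

definition tdVH :: "(('q \<times> 'q) \<times> ('q \<times> 'q)) set \<Rightarrow> ('q \<times> 'q) set \<Rightarrow> ('q \<times> 'q) set" where
  "tdVH C F = {(q1, q2) | q1 q2 q3 q4. ((q1, q2), (q3, q4)) \<in> C \<and> (q3, q4) \<in> F}"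

definition tHV :: "('q \<times> 'q) set \<Rightarrow> (('q \<times> 'q) \<times> ('q \<times> 'q)) set \<Rightarrow> (('q \<times> 'q) \<times> ('q \<times> 'q)) set" where
  "tHV F C = {((q1, q3), (q4, q5)) | q1 q2 q3 q4 q5. (q1, q2) \<in> F \<and> ((q2, q3), (q4, q5)) \<in> C}"

definition tVH :: "(('q \<times> 'q) \<times> ('q \<times> 'q)) set \<Rightarrow> ('q \<times> 'q) set \<Rightarrow> (('q \<times> 'q) \<times> ('q \<times> 'q)) set" where
  "tVH C F = {((q1, q5), (q3, q4)) | q1 q2 q3 q4 q5. ((q1, q2), (q3, q4)) \<in> C \<and> (q2, q5) \<in> F}"

definition idQ :: "('q \<times> 'q) set" where
  "idQ = {(q, q) | q. True}"

definition idQ2 :: "(('q \<times> 'q) \<times> ('q \<times> 'q)) set" where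
  "idQ2 = {((q1, q2), (q1, q2)) | q1 q2. True}"

(* The transition algebra F_N = (H,V,tHH,tHV,tVH,tVV,tdVH,idQ,idQ2) of N depends on
   N only through its state set Q (the type 'q); delta, Init, q0, qF play no role. *)

end

theory Submission
  imports Defs
begin

text \<open>The transition algebra is an algebra of binary relations: forests are relations on
  \<open>Q\<close>, contexts are relations on \<open>Q \<times> Q\<close>, both products and both units are relational
  composition and identity, \<open>C \<odot> F\<close> is the image of \<open>F\<close> under \<open>C\<inverse>\<close>, and
  \<open>F \<oplus> C\<close>, \<open>C \<oplus> F\<close> prepend to \<open>C\<close> a relation on one coordinate of \<open>Q \<times> Q\<close>
  induced by \<open>F\<close>. Every forest algebra axiom then reduces to associativity and the unit
  laws of composition, functoriality of these coordinate liftings, and the fact that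
  liftings to different coordinates commute.\<close>

definition lift_fst :: "('a \<times> 'a) set \<Rightarrow> (('a \<times> 'b) \<times> ('a \<times> 'b)) set" where
  "lift_fst R = {((a, c), (b, c)) | a b c. (a, b) \<in> R}"

definition lift_snd :: "('b \<times> 'b) set \<Rightarrow> (('a \<times> 'b) \<times> ('a \<times> 'b)) set" where
  "lift_snd R = {((c, a), (c, b)) | a b c. (a, b) \<in> R}"

lemma lift_fst_Id [simp]: "lift_fst Id = Id"
  by (auto simp: lift_fst_def)

lemma lift_snd_Id [simp]: "lift_snd Id = Id"
  by (auto simp: lift_snd_def)

lemma lift_fst_relcomp: "lift_fst (R O S) = lift_fst R O lift_fst S"
  by (auto simp: lift_fst_def)

lemma lift_snd_relcomp: "lift_snd (R O S) = lift_snd R O lift_snd S"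
  by (auto simp: lift_snd_def)

lemma lift_snd_lift_fst_commute: "lift_snd S O lift_fst R = lift_fst R O lift_snd S"
  by (auto simp: lift_fst_def lift_snd_def)

lemma lift_snd_lift_fst_relcomp_commute:
  "lift_snd S O (lift_fst R O T) = lift_fst R O (lift_snd S O T)"
  by (simp add: lift_snd_lift_fst_commute flip: O_assoc)

lemma Image_converse_lift_fst: "(lift_fst R)\<inverse> `` S = R O S"
  by (auto simp: lift_fst_def)

lemma Image_converse_lift_snd: "(lift_snd R)\<inverse> `` S = S O R\<inverse>"
  by (auto simp: lift_snd_def)

lemma idQ_eq_Id: "idQ = Id"
  by (auto simp: idQ_def)

lemma idQ2_eq_Id: "idQ2 = Id"
  by (auto simp: idQ2_def)

lemma tHH_eq_relcomp: "tHH = relcomp"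
  by (auto simp: tHH_def fun_eq_iff)

lemma tVV_eq_relcomp: "tVV = relcomp"
  by (fastforce simp: tVV_def fun_eq_iff)

lemma tdVH_eq_Image_converse: "tdVH = (\<lambda>C F. C\<inverse> `` F)"
  by (fastforce simp: tdVH_def fun_eq_iff)

lemma tHV_eq_lift_fst: "tHV = (\<lambda>F C. lift_fst F O C)"
  by (fastforce simp: tHV_def lift_fst_def fun_eq_iff)

lemma tVH_eq_lift_snd: "tVH = (\<lambda>C F. lift_snd (F\<inverse>) O C)"
  by (fastforce simp: tVH_def lift_snd_def fun_eq_iff)

theorem lemma4p3:
  shows "forest_algebra (tHH :: ('q::finite \<times> 'q) set \<Rightarrow> _) tHV tVH tVV tdVH idQ idQ2"
  unfolding forest_algebra_def tHH_eq_relcomp tVV_eq_relcomp tdVH_eq_Image_converse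
    tHV_eq_lift_fst tVH_eq_lift_snd idQ_eq_Id idQ2_eq_Id
  by (simp add: O_assoc converse_relcomp relcomp_Image lift_fst_relcomp lift_snd_relcomp
      lift_snd_lift_fst_relcomp_commute Image_converse_lift_fst Image_converse_lift_snd)

end
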